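(* Let $(\Delta,\mathcal H)$ be a generic cut with associated simplicial complexes $K_\Delta,K_+,K_-$ on $\widetilde{[m]}=[m]\cup\{o\}$, and set $W=K_+\cap K_-$. Let $B$ be an integer $r\times(m+1)$ matrix of rank $r$ (columns indexed by $\widetilde{[m]}$), $u_i=\sum_{j\in\widetilde{[m]}}B_{ij}x_j$, $S=\mathbb Z[u_1,\dots,u_r]\subset\mathbb Z[x_j:j\in\widetilde{[m]}]$, with $\mathbb Z$ an $S$-module via $u_i\mapsto0$. Suppose $\operatorname{Tor}_1^S(\mathbb Z[W],\mathbb Z)=0$. If $\operatorname{Tor}_1^S(\mathbb Z[K_\Delta],\mathbb Z)=0$, then $\operatorname{Tor}_1^S(\mathbb Z[K_+],\mathbb Z)=\operatorname{Tor}_1^S(\mathbb Z[K_-],\mathbb Z)=0$.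
   Context: Let $\Delta\subset\mathbb R^n$ be an $n$-dimensional simple polytope $\Delta=\{x:\langle x,\lambda_i\rangle+\eta_i\ge0,\ i=1,\dots,m\}$ whose facets $H_i=\Delta\cap\{\langle x,\lambda_i\rangle+\eta_i=0\}$ are all nonempty. A generic cut is a hyperplane $\mathcal H=\{\langle x,\lambda_0\rangle+\xi=0\}$ in general position with the hyperplanes $\{\langle x,\lambda_i\rangle+\eta_i=0\}$ and with $H_o:=\mathcal H\cap\Delta\neq\varnothing$. Set $\Delta_\pm=\Delta\cap\{\pm(\langle x,\lambda_0\rangle+\xi)\ge0\}$, $K_\Delta=\{\sigma\subset[m]:\bigcap_{i\in\sigma}H_i\ne\varnothing\}\cup\{\varnothing\}$, $K_\pm=\{\sigma\subset\widetilde{[m]}:\bigcap_{i\in\sigma}(H_i\cap\Delta_\pm)\ne\varnothing\}\cup\{\varnothing\}$, all regarded as simplicial complexes on $\widetilde{[m]}$ (so $o$ is a vertex not in any face of $K_\Delta$). The Stanley–Reisner ring of a complex $L$ on $\widetilde{[m]}$ is $\mathbb Z[L]=\mathbb Z[x_j:j\in\widetilde{[m]}]/\langle x_\sigma:\sigma\notin L\rangle$, $x_\sigma=\prod_{j\in\sigma}x_j$. *)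

theory Defs
  imports "HOL-Analysis.Analysis" "HOL-Library.Poly_Mapping"
begin

text \<open>Vertex set [m]~ = {0..m}; the extra vertex o is encoded as 0, [m] = {1..m}.\<close>

definition polyhedron_of :: "nat \<Rightarrow> (nat \<Rightarrow> real^'n) \<Rightarrow> (nat \<Rightarrow> real) \<Rightarrow> (real^'n) set" where
  "polyhedron_of m lam eta = {x. \<forall>i\<in>{1..m}. lam i \<bullet> x + eta i \<ge> 0}"

definition facet_H :: "nat \<Rightarrow> (nat \<Rightarrow> real^'n) \<Rightarrow> (nat \<Rightarrow> real) \<Rightarrow> nat \<Rightarrow> (real^'n) set" where
  "facet_H m lam eta i = polyhedron_of m lam eta \<inter> {x. lam i \<bullet> x + eta i = 0}"

definition simple_polytope_data :: "nat \<Rightarrow> (nat \<Rightarrow> real^'n) \<Rightarrow> (nat \<Rightarrow> real) \<Rightarrow> bool" where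
  "simple_polytope_data m lam eta \<longleftrightarrow>
     (let D = polyhedron_of m lam eta in
       polytope D \<and> aff_dim D = int CARD('n) \<and>
       (\<forall>i\<in>{1..m}. facet_H m lam eta i facet_of D) \<and>
       inj_on (facet_H m lam eta) {1..m} \<and>
       (\<forall>v. v extreme_point_of D \<longrightarrow>
              card {i\<in>{1..m}. v \<in> facet_H m lam eta i} = CARD('n)))"

definition hyp :: "(nat \<Rightarrow> real^'n) \<Rightarrow> (nat \<Rightarrow> real) \<Rightarrow> real^'n \<Rightarrow> real \<Rightarrow> nat \<Rightarrow> (real^'n) set" where
  "hyp lam eta lam0 xi j =
     (if j = 0 then {x. lam0 \<bullet> x + xi = 0} else {x. lam j \<bullet> x + eta j = 0})"

definition generic_cut :: "nat \<Rightarrow> (nat \<Rightarrow> real^'n) \<Rightarrow> (nat \<Rightarrow> real) \<Rightarrow> real^'n \<Rightarrow> real \<Rightarrow> bool" where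
  "generic_cut m lam eta lam0 xi \<longleftrightarrow>
     (\<forall>\<sigma>. \<sigma> \<subseteq> {0..m} \<and> 0 \<in> \<sigma> \<longrightarrow>
        (\<Inter>j\<in>\<sigma>. hyp lam eta lam0 xi j) = {} \<or>
        aff_dim (\<Inter>j\<in>\<sigma>. hyp lam eta lam0 xi j) = int CARD('n) - int (card \<sigma>)) \<and>
     {x. lam0 \<bullet> x + xi = 0} \<inter> polyhedron_of m lam eta \<noteq> {}"

definition half_poly :: "nat \<Rightarrow> (nat \<Rightarrow> real^'n) \<Rightarrow> (nat \<Rightarrow> real) \<Rightarrow> real^'n \<Rightarrow> real \<Rightarrow> bool \<Rightarrow> (real^'n) set" where
  "half_poly m lam eta lam0 xi s = polyhedron_of m lam eta \<inter>
     {x. (if s then 1 else -1) * (lam0 \<bullet> x + xi) \<ge> 0}"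

text \<open>K_Delta as a complex on {0..m} (0 = o is a ghost vertex).\<close>
definition K_Delta :: "nat \<Rightarrow> (nat \<Rightarrow> real^'n) \<Rightarrow> (nat \<Rightarrow> real) \<Rightarrow> nat set set" where
  "K_Delta m lam eta = {\<sigma>. \<sigma> \<subseteq> {1..m} \<and> (\<sigma> = {} \<or> (\<Inter>i\<in>\<sigma>. facet_H m lam eta i) \<noteq> {})}"

text \<open>K_+ / K_-: facets of Delta_pm are H_i cap Delta_pm (i in [m]) and H_o (index 0).\<close>
definition K_half :: "nat \<Rightarrow> (nat \<Rightarrow> real^'n) \<Rightarrow> (nat \<Rightarrow> real) \<Rightarrow> real^'n \<Rightarrow> real \<Rightarrow> bool \<Rightarrow> nat set set" where
  "K_half m lam eta lam0 xi s = {\<sigma>. \<sigma> \<subseteq> {0..m} \<and> (\<sigma> = {} \<or>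
      (\<Inter>j\<in>\<sigma>. (if j = 0 then {x. lam0 \<bullet> x + xi = 0} \<inter> polyhedron_of m lam eta
                  else facet_H m lam eta j) \<inter> half_poly m lam eta lam0 xi s) \<noteq> {})}"

text \<open>Integer polynomials in variables x_0, x_1, ...; monomials are exponent vectors.\<close>
type_synonym zpoly = "(nat \<Rightarrow>\<^sub>0 nat) \<Rightarrow>\<^sub>0 int"

definition monom_x :: "(nat \<Rightarrow>\<^sub>0 nat) \<Rightarrow> zpoly" where
  "monom_x a = Poly_Mapping.single a 1"

definition var_x :: "nat \<Rightarrow> zpoly" where
  "var_x j = monom_x (Poly_Mapping.single j 1)"

definition monos_m :: "nat \<Rightarrow> (nat \<Rightarrow>\<^sub>0 nat) set" where
  "monos_m m = {a. Poly_Mapping.keys a \<subseteq> {0..m}}"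

definition polyring :: "nat \<Rightarrow> zpoly set" where
  "polyring m = {p. Poly_Mapping.keys p \<subseteq> monos_m m}"

definition gen_ideal :: "zpoly set \<Rightarrow> zpoly set \<Rightarrow> zpoly set" where
  "gen_ideal R G = {p. \<exists>(n::nat) c g. (\<forall>k<n. c k \<in> R \<and> g k \<in> G) \<and> p = (\<Sum>k<n. c k * g k)}"

definition SR_ideal :: "nat \<Rightarrow> nat set set \<Rightarrow> zpoly set" where
  "SR_ideal m L = gen_ideal (polyring m) {(\<Prod>j\<in>\<sigma>. var_x j) | \<sigma>. \<sigma> \<subseteq> {0..m} \<and> \<sigma> \<notin> L}"

inductive_set subring_gen :: "zpoly set \<Rightarrow> zpoly set" for G where
  const: "of_int k \<in> subring_gen G"
| gen: "g \<in> G \<Longrightarrow> g \<in> subring_gen G"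
| add: "p \<in> subring_gen G \<Longrightarrow> q \<in> subring_gen G \<Longrightarrow> p + q \<in> subring_gen G"
| mult: "p \<in> subring_gen G \<Longrightarrow> q \<in> subring_gen G \<Longrightarrow> p * q \<in> subring_gen G"

definition lin_form :: "nat \<Rightarrow> (nat \<Rightarrow> nat \<Rightarrow> int) \<Rightarrow> nat \<Rightarrow> zpoly" where
  "lin_form m B i = (\<Sum>j\<in>{0..m}. of_int (B i j) * var_x j)"

text \<open>An r x (m+1) integer matrix has rank r iff its rows are linearly independent (over Q).\<close>
definition full_row_rank :: "nat \<Rightarrow> nat \<Rightarrow> (nat \<Rightarrow> nat \<Rightarrow> int) \<Rightarrow> bool" where
  "full_row_rank r m B \<longleftrightarrow>
     (\<forall>c::nat \<Rightarrow> rat. (\<forall>j\<in>{0..m}. (\<Sum>i<r. c i * of_int (B i j)) = 0) \<longrightarrow> (\<forall>i<r. c i = 0))"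

definition S_ring :: "nat \<Rightarrow> nat \<Rightarrow> (nat \<Rightarrow> nat \<Rightarrow> int) \<Rightarrow> zpoly set" where
  "S_ring r m B = subring_gen (lin_form m B ` {..<r})"

text \<open>Augmentation ideal I = (u_1,...,u_r) of S, so that Z = S/I as an S-module.\<close>
definition aug_ideal :: "nat \<Rightarrow> nat \<Rightarrow> (nat \<Rightarrow> nat \<Rightarrow> int) \<Rightarrow> zpoly set" where
  "aug_ideal r m B = gen_ideal (S_ring r m B) (lin_form m B ` {..<r})"

text \<open>Tor_1^S(Z[L], S/I), computed from a free presentation 0 -> K -> F -> Z[L] -> 0, where
  F is the free S-module on the monomials x^a (a in monos_m m), F -> Z[L] sends the basis
  element e_a to the class of x^a, and K is the kernel.  Then
  Tor_1^S(Z[L], S/I) = ker(K/IK -> F/IF) = (K cap IF)/IK.\<close>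

definition free_mod :: "nat \<Rightarrow> nat \<Rightarrow> (nat \<Rightarrow> nat \<Rightarrow> int) \<Rightarrow> ((nat \<Rightarrow>\<^sub>0 nat) \<Rightarrow> zpoly) set" where
  "free_mod r m B = {f. finite {a. f a \<noteq> 0} \<and> (\<forall>a. f a \<noteq> 0 \<longrightarrow> a \<in> monos_m m) \<and>
                        (\<forall>a. f a \<in> S_ring r m B)}"

definition present_map :: "((nat \<Rightarrow>\<^sub>0 nat) \<Rightarrow> zpoly) \<Rightarrow> zpoly" where
  "present_map f = (\<Sum>a\<in>{a. f a \<noteq> 0}. f a * monom_x a)"

definition syz_mod :: "nat \<Rightarrow> nat \<Rightarrow> (nat \<Rightarrow> nat \<Rightarrow> int) \<Rightarrow> nat set set \<Rightarrow> ((nat \<Rightarrow>\<^sub>0 nat) \<Rightarrow> zpoly) set" where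
  "syz_mod r m B L = {f \<in> free_mod r m B. present_map f \<in> SR_ideal m L}"

definition ideal_times_mod :: "zpoly set \<Rightarrow> ((nat \<Rightarrow>\<^sub>0 nat) \<Rightarrow> zpoly) set \<Rightarrow> ((nat \<Rightarrow>\<^sub>0 nat) \<Rightarrow> zpoly) set" where
  "ideal_times_mod I N = {f. \<exists>(n::nat) c g. (\<forall>k<n. c k \<in> I \<and> g k \<in> N) \<and> f = (\<lambda>a. \<Sum>k<n. c k * g k a)}"

definition ideal_times_free :: "zpoly set \<Rightarrow> ((nat \<Rightarrow>\<^sub>0 nat) \<Rightarrow> zpoly) set \<Rightarrow> ((nat \<Rightarrow>\<^sub>0 nat) \<Rightarrow> zpoly) set" where
  "ideal_times_free I F = {f \<in> F. \<forall>a. f a \<in> I}"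

definition Tor1_SR_vanishes :: "nat \<Rightarrow> nat \<Rightarrow> (nat \<Rightarrow> nat \<Rightarrow> int) \<Rightarrow> nat set set \<Rightarrow> bool" where
  "Tor1_SR_vanishes r m B L \<longleftrightarrow>
     syz_mod r m B L \<inter> ideal_times_free (aug_ideal r m B) (free_mod r m B)
       \<subseteq> ideal_times_mod (aug_ideal r m B) (syz_mod r m B L)"

end

theory Submission
  imports Defs "HOL-Library.Function_Algebras"
begin

(* The Stanley-Reisner ideal I_L of a complex L is spanned by the monomials whose support
   is a non-face of L. Hence I_{K+} \<inter> I_{K-} = I_{K+ \<union> K-} and I_{K+} + I_{K-} = I_W, and the
   Mayer-Vietoris sequence  0 -> Z[K+ \<union> K-] -> Z[K+] \<oplus> Z[K-] -> Z[W] -> 0  reduces the claim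
   to Tor_1(Z[K+ \<union> K-]) = 0. For L = K+ \<union> K- the cut gives K_\<Delta> \<subseteq> L with the same faces
   avoiding o, and the closed star of o in L is W; so multiplication by x_o gives
   0 -> Z[W] -> Z[L] -> Z[K_\<Delta>] -> 0, and Tor_1(Z[L]) = 0 follows from the hypotheses on W
   and K_\<Delta>. Both long exact sequence arguments are carried out on the presentation defining
   Tor_1: a syzygy with coefficients in the augmentation ideal is lifted along the short exact
   sequence and split into pieces controlled by its two outer terms. *)

lemma keys_add_nat:
  "Poly_Mapping.keys (a + b) = Poly_Mapping.keys a \<union> Poly_Mapping.keys (b :: 'a \<Rightarrow>\<^sub>0 nat)"
  by (auto simp: in_keys_iff lookup_add)

lemma sum_lessThan_add: "(\<Sum>k<n1 + n2. h k) = (\<Sum>k<n1. h k) + (\<Sum>k<n2. h (n1 + k))"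
  for n1 n2 :: nat
  by (induction n2) (simp_all add: add.assoc)

section \<open>The polynomial ring and the subring generated by the linear forms\<close>

lemma polyring_zero: "0 \<in> polyring m"
  by (simp add: polyring_def)

lemma polyring_add: "p \<in> polyring m \<Longrightarrow> q \<in> polyring m \<Longrightarrow> p + q \<in> polyring m"
  unfolding polyring_def using keys_add[of p q] by blast

lemma polyring_uminus: "p \<in> polyring m \<Longrightarrow> - p \<in> polyring m"
  by (simp add: polyring_def)

lemma polyring_mult: "p \<in> polyring m \<Longrightarrow> q \<in> polyring m \<Longrightarrow> p * q \<in> polyring m"
  unfolding polyring_def monos_m_def using keys_mult[of p q] by (fastforce simp: keys_add_nat)

lemma polyring_of_int: "(of_int k :: zpoly) \<in> polyring m"
proof -
  have "(of_int k :: zpoly) = Poly_Mapping.single 0 k"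
    by (metis single_of_int of_int_eq_id id_apply)
  then show ?thesis by (simp add: polyring_def monos_m_def)
qed

lemma polyring_sum: "(\<And>k. k \<in> A \<Longrightarrow> f k \<in> polyring m) \<Longrightarrow> sum f A \<in> polyring m"
  by (induction A rule: infinite_finite_induct) (auto simp: polyring_zero polyring_add)

lemma monom_x_in_polyring: "a \<in> monos_m m \<Longrightarrow> monom_x a \<in> polyring m"
  by (simp add: monom_x_def polyring_def)

lemma var_x_in_polyring: "j \<le> m \<Longrightarrow> var_x j \<in> polyring m"
  unfolding var_x_def by (rule monom_x_in_polyring) (simp add: monos_m_def)

lemma lin_form_in_polyring: "lin_form m B i \<in> polyring m"
  unfolding lin_form_def
  by (rule polyring_sum) (simp add: polyring_mult polyring_of_int var_x_in_polyring)

lemma S_ring_of_int: "of_int k \<in> S_ring r m B"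
  unfolding S_ring_def by (rule subring_gen.const)

lemma S_ring_zero: "0 \<in> S_ring r m B"
  using S_ring_of_int[of 0] by simp

lemma S_ring_add: "p \<in> S_ring r m B \<Longrightarrow> q \<in> S_ring r m B \<Longrightarrow> p + q \<in> S_ring r m B"
  unfolding S_ring_def by (rule subring_gen.add)

lemma S_ring_mult: "p \<in> S_ring r m B \<Longrightarrow> q \<in> S_ring r m B \<Longrightarrow> p * q \<in> S_ring r m B"
  unfolding S_ring_def by (rule subring_gen.mult)

lemma S_ring_diff: "p \<in> S_ring r m B \<Longrightarrow> q \<in> S_ring r m B \<Longrightarrow> p - q \<in> S_ring r m B"
  using S_ring_add[of p r m B "of_int (-1) * q"] S_ring_mult[OF S_ring_of_int[of "-1"]] by simp

lemma S_ring_sum: "(\<And>k. k \<in> A \<Longrightarrow> f k \<in> S_ring r m B) \<Longrightarrow> sum f A \<in> S_ring r m B"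
  by (induction A rule: infinite_finite_induct) (auto simp: S_ring_zero S_ring_add)

lemma S_ring_subset_polyring: "S_ring r m B \<subseteq> polyring m"
proof
  fix p assume "p \<in> S_ring r m B"
  then show "p \<in> polyring m"
    unfolding S_ring_def
    by (induction rule: subring_gen.induct)
       (auto simp: polyring_of_int lin_form_in_polyring polyring_add polyring_mult)
qed

lemma gen_idealI:
  "\<forall>k<n. c k \<in> R \<and> g k \<in> G \<Longrightarrow> p = (\<Sum>k<n. c k * g k) \<Longrightarrow> p \<in> gen_ideal R G" for n :: nat
  unfolding gen_ideal_def by blast

lemma gen_idealE:
  assumes "p \<in> gen_ideal R G"
  obtains n :: nat and c g where "\<forall>k<n. c k \<in> R \<and> g k \<in> G" "p = (\<Sum>k<n. c k * g k)"
  using assms unfolding gen_ideal_def by blast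

lemma gen_ideal_zero: "0 \<in> gen_ideal R G"
  by (rule gen_idealI[of 0]) simp_all

lemma gen_ideal_single: "c \<in> R \<Longrightarrow> g \<in> G \<Longrightarrow> c * g \<in> gen_ideal R G"
  by (rule gen_idealI[of 1 "\<lambda>_. c" R "\<lambda>_. g"]) simp_all

lemma gen_ideal_add:
  assumes "p \<in> gen_ideal R G" "q \<in> gen_ideal R G"
  shows "p + q \<in> gen_ideal R G"
proof -
  obtain n1 :: nat and c1 g1 where 1: "\<forall>k<n1. c1 k \<in> R \<and> g1 k \<in> G" "p = (\<Sum>k<n1. c1 k * g1 k)"
    using assms(1) by (rule gen_idealE)
  obtain n2 :: nat and c2 g2 where 2: "\<forall>k<n2. c2 k \<in> R \<and> g2 k \<in> G" "q = (\<Sum>k<n2. c2 k * g2 k)"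
    using assms(2) by (rule gen_idealE)
  define c where "c k = (if k < n1 then c1 k else c2 (k - n1))" for k
  define g where "g k = (if k < n1 then g1 k else g2 (k - n1))" for k
  show ?thesis
  proof (rule gen_idealI[of "n1 + n2" c R g])
    show "\<forall>k<n1 + n2. c k \<in> R \<and> g k \<in> G"
      using 1 2 by (auto simp: c_def g_def)
    show "p + q = (\<Sum>k<n1 + n2. c k * g k)"
      unfolding sum_lessThan_add 1 2 c_def g_def by simp
  qed
qed

lemma gen_ideal_mult:
  assumes "\<And>a b. a \<in> R \<Longrightarrow> b \<in> R \<Longrightarrow> a * b \<in> R" and "a \<in> R" and "p \<in> gen_ideal R G"
  shows "a * p \<in> gen_ideal R G"
proof -
  obtain n :: nat and c g where cg: "\<forall>k<n. c k \<in> R \<and> g k \<in> G" "p = (\<Sum>k<n. c k * g k)"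
    using assms(3) by (rule gen_idealE)
  show ?thesis
    by (rule gen_idealI[of n "\<lambda>k. a * c k"])
       (use assms cg in \<open>simp_all add: sum_distrib_left mult.assoc\<close>)
qed

lemma gen_ideal_uminus:
  assumes "\<And>a. a \<in> R \<Longrightarrow> - a \<in> R" and "p \<in> gen_ideal R G"
  shows "- p \<in> gen_ideal R G"
proof -
  obtain n :: nat and c g where cg: "\<forall>k<n. c k \<in> R \<and> g k \<in> G" "p = (\<Sum>k<n. c k * g k)"
    using assms(2) by (rule gen_idealE)
  show ?thesis
    by (rule gen_idealI[of n "\<lambda>k. - c k"]) (use assms cg in \<open>simp_all add: sum_negf\<close>)
qed

lemma gen_ideal_subset:
  assumes "G \<subseteq> R" and "0 \<in> R" and "\<And>a b. a \<in> R \<Longrightarrow> b \<in> R \<Longrightarrow> a + b \<in> R"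
    and "\<And>a b. a \<in> R \<Longrightarrow> b \<in> R \<Longrightarrow> a * b \<in> R"
  shows "gen_ideal R G \<subseteq> R"
proof
  fix p assume "p \<in> gen_ideal R G"
  then obtain n :: nat and c g where cg: "\<forall>k<n. c k \<in> R \<and> g k \<in> G" "p = (\<Sum>k<n. c k * g k)"
    by (rule gen_idealE)
  have "(\<Sum>k\<in>A. c k * g k) \<in> R" if "A \<subseteq> {..<n}" for A
    using that by (induction A rule: infinite_finite_induct) (use assms cg in auto)
  then show "p \<in> R" using cg by simp
qed

lemma aug_ideal_subset_S_ring: "aug_ideal r m B \<subseteq> S_ring r m B"
  unfolding aug_ideal_def
  by (rule gen_ideal_subset)
     (auto simp: S_ring_zero S_ring_add S_ring_mult, auto simp: S_ring_def intro: subring_gen.gen)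

lemma aug_ideal_subset_polyring: "aug_ideal r m B \<subseteq> polyring m"
  using aug_ideal_subset_S_ring S_ring_subset_polyring by blast

lemma aug_ideal_sum: "(\<And>k. k \<in> A \<Longrightarrow> f k \<in> aug_ideal r m B) \<Longrightarrow> sum f A \<in> aug_ideal r m B"
  by (induction A rule: infinite_finite_induct)
     (auto simp: aug_ideal_def gen_ideal_zero intro: gen_ideal_add)

lemma aug_ideal_mult_S_ring:
  "p \<in> aug_ideal r m B \<Longrightarrow> a \<in> S_ring r m B \<Longrightarrow> p * a \<in> aug_ideal r m B"
  unfolding aug_ideal_def mult.commute[of p] by (rule gen_ideal_mult) (auto simp: S_ring_mult)

definition poly_ideal :: "nat \<Rightarrow> zpoly set \<Rightarrow> bool" where
  "poly_ideal m J \<longleftrightarrow> J \<subseteq> polyring m \<and> 0 \<in> J \<and> (\<forall>p\<in>J. \<forall>q\<in>J. p + q \<in> J) \<and>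
     (\<forall>a\<in>polyring m. \<forall>p\<in>J. a * p \<in> J)"

lemma poly_ideal_subset: "poly_ideal m J \<Longrightarrow> J \<subseteq> polyring m"
  by (simp add: poly_ideal_def)

lemma poly_ideal_add: "poly_ideal m J \<Longrightarrow> p \<in> J \<Longrightarrow> q \<in> J \<Longrightarrow> p + q \<in> J"
  by (simp add: poly_ideal_def)

lemma poly_ideal_mult: "poly_ideal m J \<Longrightarrow> a \<in> polyring m \<Longrightarrow> p \<in> J \<Longrightarrow> a * p \<in> J"
  by (simp add: poly_ideal_def)

lemma poly_ideal_diff:
  assumes "poly_ideal m J" "p \<in> J" "q \<in> J"
  shows "p - q \<in> J"
  using poly_ideal_add[OF assms(1,2) poly_ideal_mult[OF assms(1) polyring_of_int[of "-1"] assms(3)]]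
  by simp

lemma poly_ideal_sum:
  assumes "poly_ideal m J" and "\<And>k. k \<in> A \<Longrightarrow> a k \<in> polyring m \<and> p k \<in> J"
  shows "(\<Sum>k\<in>A. a k * p k) \<in> J"
  using assms(2)
  by (induction A rule: infinite_finite_induct)
     (use assms(1) in \<open>auto simp: poly_ideal_def\<close>)

section \<open>Monomial ideals of simplicial complexes\<close>

definition downclosed :: "'a set set \<Rightarrow> bool" where
  "downclosed L \<longleftrightarrow> (\<forall>\<sigma>\<in>L. \<forall>\<tau>. \<tau> \<subseteq> \<sigma> \<longrightarrow> \<tau> \<in> L)"

lemma downclosed_Int: "downclosed K1 \<Longrightarrow> downclosed K2 \<Longrightarrow> downclosed (K1 \<inter> K2)"
  unfolding downclosed_def by blast

lemma downclosed_Un: "downclosed K1 \<Longrightarrow> downclosed K2 \<Longrightarrow> downclosed (K1 \<union> K2)"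
  unfolding downclosed_def by blast

definition nonface_ideal :: "nat \<Rightarrow> nat set set \<Rightarrow> zpoly set" where
  "nonface_ideal m L = {p \<in> polyring m. \<forall>a \<in> Poly_Mapping.keys p. Poly_Mapping.keys a \<notin> L}"

definition indicator_exp :: "nat set \<Rightarrow> (nat \<Rightarrow>\<^sub>0 nat)" where
  "indicator_exp \<sigma> = (\<Sum>j\<in>\<sigma>. Poly_Mapping.single j 1)"

lemma lookup_indicator_exp:
  "finite \<sigma> \<Longrightarrow> Poly_Mapping.lookup (indicator_exp \<sigma>) j = (if j \<in> \<sigma> then 1 else 0)"
  by (simp add: indicator_exp_def lookup_sum lookup_single when_def)

lemma keys_indicator_exp: "finite \<sigma> \<Longrightarrow> Poly_Mapping.keys (indicator_exp \<sigma>) = \<sigma>"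
  by (auto simp: in_keys_iff lookup_indicator_exp split: if_splits)

lemma keys_monom_x: "Poly_Mapping.keys (monom_x a) = {a}"
  by (simp add: monom_x_def)

lemma monom_x_mult: "monom_x a * monom_x b = monom_x (a + b)"
  by (simp add: monom_x_def mult_single)

lemma prod_var_x: "finite \<sigma> \<Longrightarrow> (\<Prod>j\<in>\<sigma>. var_x j) = monom_x (indicator_exp \<sigma>)"
proof (induction \<sigma> rule: finite_induct)
  case empty
  show ?case by (simp add: indicator_exp_def monom_x_def)
next
  case (insert j \<sigma>)
  then show ?case by (simp add: indicator_exp_def var_x_def monom_x_mult)
qed

lemma poly_ideal_nonface_ideal:
  assumes "downclosed L"
  shows "poly_ideal m (nonface_ideal m L)"
  unfolding poly_ideal_def
proof (intro conjI ballI)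
  fix p q assume "p \<in> nonface_ideal m L" "q \<in> nonface_ideal m L"
  then show "p + q \<in> nonface_ideal m L"
    using keys_add[of p q] by (auto simp: nonface_ideal_def polyring_add)
next
  fix a p assume a: "a \<in> polyring m" and p: "p \<in> nonface_ideal m L"
  have "Poly_Mapping.keys x \<notin> L" if "x \<in> Poly_Mapping.keys (a * p)" for x
  proof
    assume "Poly_Mapping.keys x \<in> L"
    obtain b c where "x = b + c" "c \<in> Poly_Mapping.keys p"
      using keys_mult[of a p] \<open>x \<in> Poly_Mapping.keys (a * p)\<close> by blast
    then have "Poly_Mapping.keys c \<in> L"
      using \<open>Poly_Mapping.keys x \<in> L\<close> assms by (auto simp: downclosed_def keys_add_nat)
    then show False using p \<open>c \<in> Poly_Mapping.keys p\<close> by (auto simp: nonface_ideal_def)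
  qed
  then show "a * p \<in> nonface_ideal m L"
    using a p polyring_mult by (auto simp: nonface_ideal_def)
qed (auto simp: nonface_ideal_def polyring_zero)

lemma SR_ideal_subset_nonface_ideal:
  assumes "downclosed L"
  shows "SR_ideal m L \<subseteq> nonface_ideal m L"
proof
  fix p assume "p \<in> SR_ideal m L"
  then obtain n :: nat and c g where cg: "\<forall>k<n. c k \<in> polyring m \<and>
      g k \<in> {(\<Prod>j\<in>\<sigma>. var_x j) | \<sigma>. \<sigma> \<subseteq> {0..m} \<and> \<sigma> \<notin> L}" "p = (\<Sum>k<n. c k * g k)"
    unfolding SR_ideal_def by (rule gen_idealE)
  have "g k \<in> nonface_ideal m L" if "k < n" for k
  proof -
    obtain \<sigma> where \<sigma>: "g k = (\<Prod>j\<in>\<sigma>. var_x j)" "\<sigma> \<subseteq> {0..m}" "\<sigma> \<notin> L"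
      using cg(1) \<open>k < n\<close> by blast
    then have "finite \<sigma>" by (simp add: finite_subset)
    then have "g k = monom_x (indicator_exp \<sigma>)" and "Poly_Mapping.keys (indicator_exp \<sigma>) = \<sigma>"
      using \<sigma>(1) by (simp_all add: prod_var_x keys_indicator_exp)
    with \<sigma>(2,3) show ?thesis
      by (simp add: nonface_ideal_def keys_monom_x monom_x_in_polyring monos_m_def)
  qed
  with cg show "p \<in> nonface_ideal m L"
    using poly_ideal_sum[OF poly_ideal_nonface_ideal[OF assms], where A = "{..<n}" and a = c and p = g]
    by simp
qed

lemma nonface_ideal_subset_SR_ideal: "nonface_ideal m L \<subseteq> SR_ideal m L"
proof
  fix p assume "p \<in> nonface_ideal m L"
  then have "Poly_Mapping.keys p \<subseteq> {a \<in> monos_m m. Poly_Mapping.keys a \<notin> L}"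
    by (auto simp: nonface_ideal_def polyring_def)
  then show "p \<in> SR_ideal m L"
  proof (induction rule: frag_induction)
    case zero
    show ?case by (simp add: SR_ideal_def gen_ideal_zero)
  next
    case (one a)
    define \<sigma> where "\<sigma> = Poly_Mapping.keys a"
    have "finite \<sigma>" by (simp add: \<sigma>_def)
    have "Poly_Mapping.lookup (indicator_exp \<sigma>) j \<le> Poly_Mapping.lookup a j" for j
      using lookup_indicator_exp[OF \<open>finite \<sigma>\<close>, of j] by (auto simp: \<sigma>_def in_keys_iff)
    then have a_split: "(a - indicator_exp \<sigma>) + indicator_exp \<sigma> = a"
      by (intro poly_mapping_eqI) (simp add: lookup_add lookup_minus)
    have "Poly_Mapping.keys (a - indicator_exp \<sigma>) \<subseteq> Poly_Mapping.keys a"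
      by (auto simp: in_keys_iff lookup_minus)
    then have c: "monom_x (a - indicator_exp \<sigma>) \<in> polyring m"
      using one by (intro monom_x_in_polyring) (auto simp: monos_m_def)
    have g: "(\<Prod>j\<in>\<sigma>. var_x j) \<in> {(\<Prod>j\<in>\<sigma>. var_x j) | \<sigma>. \<sigma> \<subseteq> {0..m} \<and> \<sigma> \<notin> L}"
      using one by (auto simp: \<sigma>_def monos_m_def)
    have "monom_x (a - indicator_exp \<sigma>) * (\<Prod>j\<in>\<sigma>. var_x j) = frag_of a"
      by (simp add: prod_var_x[OF \<open>finite \<sigma>\<close>] monom_x_mult a_split) (simp add: monom_x_def)
    then show ?case
      using gen_ideal_single[OF c g] by (simp add: SR_ideal_def)
  next
    case (diff a b)
    have "- b \<in> SR_ideal m L"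
      using diff(2) polyring_uminus unfolding SR_ideal_def by (blast intro: gen_ideal_uminus)
    with diff(1) show ?case
      unfolding SR_ideal_def diff_conv_add_uminus by (rule gen_ideal_add)
  qed
qed

lemma SR_ideal_eq_nonface_ideal: "downclosed L \<Longrightarrow> SR_ideal m L = nonface_ideal m L"
  using SR_ideal_subset_nonface_ideal nonface_ideal_subset_SR_ideal by blast

lemma nonface_ideal_Un: "nonface_ideal m (L1 \<union> L2) = nonface_ideal m L1 \<inter> nonface_ideal m L2"
  by (auto simp: nonface_ideal_def)

lemma nonface_ideal_antimono: "L \<subseteq> L' \<Longrightarrow> nonface_ideal m L' \<subseteq> nonface_ideal m L"
  by (auto simp: nonface_ideal_def)

definition restrict_monomials :: "((nat \<Rightarrow>\<^sub>0 nat) \<Rightarrow> bool) \<Rightarrow> zpoly \<Rightarrow> zpoly" where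
  "restrict_monomials P q =
     (\<Sum>a\<in>{a \<in> Poly_Mapping.keys q. P a}. Poly_Mapping.single a (Poly_Mapping.lookup q a))"

lemma lookup_restrict_monomials:
  "Poly_Mapping.lookup (restrict_monomials P q) b = (if P b then Poly_Mapping.lookup q b else 0)"
proof -
  have "Poly_Mapping.lookup (restrict_monomials P q) b =
        (\<Sum>a\<in>{a \<in> Poly_Mapping.keys q. P a}. if a = b then Poly_Mapping.lookup q a else 0)"
    unfolding restrict_monomials_def lookup_sum
    by (rule sum.cong) (auto simp: lookup_single when_def)
  then show ?thesis by (simp add: in_keys_iff)
qed

lemma restrict_monomials_split:
  "q = restrict_monomials P q + restrict_monomials (\<lambda>a. \<not> P a) q"
  by (rule poly_mapping_eqI) (simp add: lookup_add lookup_restrict_monomials)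

lemma restrict_monomials_in_nonface_ideal:
  assumes "q \<in> polyring m"
    and "\<And>a. a \<in> Poly_Mapping.keys q \<Longrightarrow> P a \<Longrightarrow> Poly_Mapping.keys a \<notin> L"
  shows "restrict_monomials P q \<in> nonface_ideal m L"
proof -
  have keys: "Poly_Mapping.keys (restrict_monomials P q) = {a \<in> Poly_Mapping.keys q. P a}"
    by (auto simp: in_keys_iff lookup_restrict_monomials split: if_splits)
  have "Poly_Mapping.keys q \<subseteq> monos_m m"
    using assms(1) by (simp add: polyring_def)
  then show ?thesis
    using assms(2) unfolding nonface_ideal_def polyring_def mem_Collect_eq keys by blast
qed

lemma nonface_ideal_Int_split:
  assumes q: "q \<in> nonface_ideal m (L1 \<inter> L2)"
  shows "\<exists>p\<in>nonface_ideal m L1. q - p \<in> nonface_ideal m L2"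
proof
  let ?P = "\<lambda>a. Poly_Mapping.keys a \<notin> L1"
  have "q \<in> polyring m" using q by (simp add: nonface_ideal_def)
  then show "restrict_monomials ?P q \<in> nonface_ideal m L1"
    by (rule restrict_monomials_in_nonface_ideal)
  have "Poly_Mapping.keys a \<notin> L2" if "a \<in> Poly_Mapping.keys q" "\<not> ?P a" for a
    using q that by (auto simp: nonface_ideal_def)
  with \<open>q \<in> polyring m\<close> have "restrict_monomials (\<lambda>a. \<not> ?P a) q \<in> nonface_ideal m L2"
    by (rule restrict_monomials_in_nonface_ideal)
  moreover have "q - restrict_monomials ?P q = restrict_monomials (\<lambda>a. \<not> ?P a) q"
    using restrict_monomials_split[of q ?P] by (simp add: algebra_simps)
  ultimately show "q - restrict_monomials ?P q \<in> nonface_ideal m L2"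
    by simp
qed

definition closed_star :: "'a set set \<Rightarrow> 'a \<Rightarrow> 'a set set" where
  "closed_star L v = {\<sigma>. insert v \<sigma> \<in> L}"

lemma downclosed_closed_star:
  assumes "downclosed L"
  shows "downclosed (closed_star L v)"
  unfolding downclosed_def
proof (intro ballI allI impI)
  fix \<sigma> \<tau> assume "\<sigma> \<in> closed_star L v" "\<tau> \<subseteq> \<sigma>"
  then show "\<tau> \<in> closed_star L v"
    using assms insert_mono[of \<tau> \<sigma> v] by (auto simp: downclosed_def closed_star_def)
qed

lemma lookup_monom_x_mult:
  "Poly_Mapping.lookup (monom_x e * t) (e + b) = Poly_Mapping.lookup t b"
  unfolding monom_x_def lookup_mult lookup_single
  by (simp only: when_mult, subst Sum_any_when_equal') (simp add: when_def)

lemma keys_monom_x_mult: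
  "Poly_Mapping.keys (monom_x e * t) = (\<lambda>b. e + b) ` Poly_Mapping.keys t"
proof
  show "Poly_Mapping.keys (monom_x e * t) \<subseteq> (\<lambda>b. e + b) ` Poly_Mapping.keys t"
    using keys_mult[of "monom_x e" t] by (auto simp: keys_monom_x)
  show "(\<lambda>b. e + b) ` Poly_Mapping.keys t \<subseteq> Poly_Mapping.keys (monom_x e * t)"
    by (auto simp: in_keys_iff lookup_monom_x_mult)
qed

lemma var_x_mult_in_nonface_ideal_iff:
  assumes "v \<le> m" and "t \<in> polyring m"
  shows "var_x v * t \<in> nonface_ideal m L \<longleftrightarrow> t \<in> nonface_ideal m (closed_star L v)"
proof -
  have "Poly_Mapping.keys (Poly_Mapping.single v 1 + b) = insert v (Poly_Mapping.keys b)"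
    for b :: "nat \<Rightarrow>\<^sub>0 nat"
    by (simp add: keys_add_nat)
  then have "(\<forall>a\<in>Poly_Mapping.keys (var_x v * t). Poly_Mapping.keys a \<notin> L) \<longleftrightarrow>
      (\<forall>b\<in>Poly_Mapping.keys t. insert v (Poly_Mapping.keys b) \<notin> L)"
    by (simp add: var_x_def keys_monom_x_mult)
  moreover have "var_x v * t \<in> polyring m"
    using assms by (simp add: polyring_mult var_x_in_polyring)
  ultimately show ?thesis
    using assms(2) by (simp add: nonface_ideal_def closed_star_def)
qed

lemma single_add_minus_single:
  "0 < Poly_Mapping.lookup a v \<Longrightarrow> Poly_Mapping.single v 1 + (a - Poly_Mapping.single v 1) = a"
  for a :: "nat \<Rightarrow>\<^sub>0 nat"
  by (rule poly_mapping_eqI) (auto simp: lookup_add lookup_minus lookup_single when_def)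

lemma nonface_ideal_split_var:
  assumes "\<And>\<sigma>. \<sigma> \<in> L \<Longrightarrow> v \<notin> \<sigma> \<Longrightarrow> \<sigma> \<in> L'" and q: "q \<in> nonface_ideal m L'"
  shows "\<exists>t\<in>polyring m. q - var_x v * t \<in> nonface_ideal m L"
proof
  let ?P = "\<lambda>a. Poly_Mapping.lookup a v = 0"
  let ?A = "{a \<in> Poly_Mapping.keys q. \<not> ?P a}"
  let ?e = "Poly_Mapping.single v 1"
  define t where "t = (\<Sum>a\<in>?A. Poly_Mapping.single (a - ?e) (Poly_Mapping.lookup q a))"
  have "q \<in> polyring m" using q by (simp add: nonface_ideal_def)
  have "Poly_Mapping.keys (a - ?e) \<subseteq> Poly_Mapping.keys a" for a :: "nat \<Rightarrow>\<^sub>0 nat"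
    by (auto simp: in_keys_iff lookup_minus)
  then show "t \<in> polyring m"
    unfolding t_def using \<open>q \<in> polyring m\<close>
    by (intro polyring_sum) (fastforce simp: polyring_def monos_m_def)
  have "?e + (a - ?e) = a" if "\<not> ?P a" for a :: "nat \<Rightarrow>\<^sub>0 nat"
    using that by (intro single_add_minus_single) simp
  then have "var_x v * t = (\<Sum>a\<in>?A. Poly_Mapping.single a (Poly_Mapping.lookup q a))"
    by (simp add: t_def var_x_def monom_x_def sum_distrib_left mult_single)
  also have "\<dots> = restrict_monomials (\<lambda>a. \<not> ?P a) q"
    by (simp add: restrict_monomials_def)
  finally have "q - var_x v * t = restrict_monomials ?P q"
    using restrict_monomials_split[of q ?P] by (simp add: algebra_simps)
  moreover have "Poly_Mapping.keys a \<notin> L" if "a \<in> Poly_Mapping.keys q" "?P a" for a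
    using assms(1)[of "Poly_Mapping.keys a"] q that by (auto simp: nonface_ideal_def in_keys_iff)
  with \<open>q \<in> polyring m\<close> have "restrict_monomials ?P q \<in> nonface_ideal m L"
    by (rule restrict_monomials_in_nonface_ideal)
  ultimately show "q - var_x v * t \<in> nonface_ideal m L"
    by simp
qed

section \<open>The free module of the presentation\<close>

definition lin_comb ::
  "nat \<Rightarrow> (nat \<Rightarrow> zpoly) \<Rightarrow> (nat \<Rightarrow> (nat \<Rightarrow>\<^sub>0 nat) \<Rightarrow> zpoly) \<Rightarrow> (nat \<Rightarrow>\<^sub>0 nat) \<Rightarrow> zpoly" where
  "lin_comb n c g = (\<lambda>a. \<Sum>k<n. c k * g k a)"

lemma lin_comb_diff: "lin_comb n c g - lin_comb n c h = lin_comb n c (\<lambda>k. g k - h k)"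
  by (simp add: lin_comb_def fun_eq_iff sum_subtractf right_diff_distrib)

lemma present_map_eq_sum:
  assumes "finite A" and "{a. f a \<noteq> 0} \<subseteq> A"
  shows "present_map f = (\<Sum>a\<in>A. f a * monom_x a)"
  unfolding present_map_def by (rule sum.mono_neutral_left) (use assms in auto)

lemma present_map_in_polyring:
  assumes "f \<in> free_mod r m B"
  shows "present_map f \<in> polyring m"
  unfolding present_map_def
proof (rule polyring_sum)
  fix a assume "a \<in> {a. f a \<noteq> 0}"
  have "f a \<in> S_ring r m B" using assms by (simp add: free_mod_def)
  then have "f a \<in> polyring m" using S_ring_subset_polyring by blast
  moreover have "monom_x a \<in> polyring m"
    using assms \<open>a \<in> {a. f a \<noteq> 0}\<close> by (simp add: free_mod_def monom_x_in_polyring)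
  ultimately show "f a * monom_x a \<in> polyring m" by (rule polyring_mult)
qed

lemma support_lin_comb: "{a. lin_comb n c g a \<noteq> 0} \<subseteq> (\<Union>k<n. {a. g k a \<noteq> 0})"
proof -
  have "lin_comb n c g a = 0" if "\<forall>k<n. g k a = 0" for a
    using that by (simp add: lin_comb_def)
  then show ?thesis by blast
qed

lemma lin_comb_in_free_mod:
  assumes "\<forall>k<n. c k \<in> S_ring r m B \<and> g k \<in> free_mod r m B"
  shows "lin_comb n c g \<in> free_mod r m B"
proof -
  have "finite (\<Union>k<n. {a. g k a \<noteq> 0})"
    using assms by (simp add: free_mod_def)
  then have "finite {a. lin_comb n c g a \<noteq> 0}"
    by (rule finite_subset[OF support_lin_comb])
  moreover have "a \<in> monos_m m" if nonzero: "lin_comb n c g a \<noteq> 0" for a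
  proof -
    obtain k where "k < n" "g k a \<noteq> 0" using nonzero support_lin_comb[of n c g] by blast
    then show ?thesis using assms by (simp add: free_mod_def)
  qed
  moreover have "lin_comb n c g a \<in> S_ring r m B" for a
    unfolding lin_comb_def
  proof (rule S_ring_sum)
    fix k assume "k \<in> {..<n}"
    then have "c k \<in> S_ring r m B" "g k a \<in> S_ring r m B"
      using assms by (simp_all add: free_mod_def)
    then show "c k * g k a \<in> S_ring r m B" by (rule S_ring_mult)
  qed
  ultimately show ?thesis by (simp add: free_mod_def)
qed

lemma present_map_lin_comb:
  assumes "\<forall>k<n. g k \<in> free_mod r m B"
  shows "present_map (lin_comb n c g) = (\<Sum>k<n. c k * present_map (g k))"
proof -
  define A where "A = (\<Union>k<n. {a. g k a \<noteq> 0})"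
  have "finite A" using assms by (simp add: A_def free_mod_def)
  have "present_map (lin_comb n c g) = (\<Sum>a\<in>A. (\<Sum>k<n. c k * g k a) * monom_x a)"
    using present_map_eq_sum[OF \<open>finite A\<close> support_lin_comb[of n c g, folded A_def]]
    by (simp add: lin_comb_def)
  also have "\<dots> = (\<Sum>k<n. c k * (\<Sum>a\<in>A. g k a * monom_x a))"
    by (simp add: sum_distrib_right sum_distrib_left mult.assoc sum.swap[of _ A])
  also have "\<dots> = (\<Sum>k<n. c k * present_map (g k))"
  proof (rule sum.cong)
    fix k assume "k \<in> {..<n}"
    then have "{a. g k a \<noteq> 0} \<subseteq> A" by (auto simp: A_def)
    then show "c k * (\<Sum>a\<in>A. g k a * monom_x a) = c k * present_map (g k)"
      using present_map_eq_sum[OF \<open>finite A\<close>] by simp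
  qed simp
  finally show ?thesis .
qed

lemma diff_in_free_mod:
  assumes "f \<in> free_mod r m B" and "g \<in> free_mod r m B"
  shows "f - g \<in> free_mod r m B"
proof -
  have supp: "{a. (f - g) a \<noteq> 0} \<subseteq> {a. f a \<noteq> 0} \<union> {a. g a \<noteq> 0}"
    by auto
  then have "finite {a. (f - g) a \<noteq> 0}"
    using assms by (auto simp: free_mod_def intro: finite_subset)
  moreover have "a \<in> monos_m m" if "(f - g) a \<noteq> 0" for a
    using that supp assms by (auto simp: free_mod_def)
  ultimately show ?thesis
    using assms by (simp add: free_mod_def S_ring_diff)
qed

lemma present_map_diff:
  assumes "f \<in> free_mod r m B" and "g \<in> free_mod r m B"
  shows "present_map (f - g) = present_map f - present_map g"
proof -
  define A where "A = {a. f a \<noteq> 0} \<union> {a. g a \<noteq> 0}"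
  have "finite A" using assms by (simp add: A_def free_mod_def)
  have "present_map (f - g) = (\<Sum>a\<in>A. (f a - g a) * monom_x a)"
    by (subst present_map_eq_sum[OF \<open>finite A\<close>]) (auto simp: A_def)
  also have "\<dots> = present_map f - present_map g"
    using present_map_eq_sum[OF \<open>finite A\<close>]
    by (simp add: A_def left_diff_distrib sum_subtractf)
  finally show ?thesis .
qed

lemma present_map_surj:
  assumes "q \<in> polyring m"
  shows "\<exists>h\<in>free_mod r m B. present_map h = q"
proof
  define h where "h a = (of_int (Poly_Mapping.lookup q a) :: zpoly)" for a
  have supp: "{a. h a \<noteq> 0} = Poly_Mapping.keys q"
    by (auto simp: h_def in_keys_iff)
  with assms show "h \<in> free_mod r m B"
    by (auto simp: free_mod_def h_def S_ring_of_int polyring_def)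
  have "h a * monom_x a = Poly_Mapping.single a (Poly_Mapping.lookup q a)" for a
    by (simp add: h_def monom_x_def mult_single flip: single_of_int)
  then have "present_map h = (\<Sum>a\<in>Poly_Mapping.keys q. Poly_Mapping.single a (Poly_Mapping.lookup q a))"
    by (simp add: present_map_def supp)
  also have "\<dots> = q"
    by (rule poly_mapping_eqI) (simp add: lookup_sum lookup_single when_def in_keys_iff)
  finally show "present_map h = q" .
qed

lemma present_map_surj_choice:
  assumes "\<forall>k<n. \<exists>q\<in>polyring m. P k q"
  obtains h where "\<forall>k<n. h k \<in> free_mod r m B \<and> P k (present_map (h k))"
proof -
  have "\<forall>k\<in>{..<n}. \<exists>h. h \<in> free_mod r m B \<and> P k (present_map h)"
    using assms present_map_surj by fastforce
  then obtain h where "\<forall>k\<in>{..<n}. h k \<in> free_mod r m B \<and> P k (present_map (h k))"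
    by (rule bchoice[THEN exE])
  then have "\<forall>k<n. h k \<in> free_mod r m B \<and> P k (present_map (h k))"
    by simp
  then show ?thesis by (rule that)
qed

definition shift_var :: "nat \<Rightarrow> ((nat \<Rightarrow>\<^sub>0 nat) \<Rightarrow> zpoly) \<Rightarrow> (nat \<Rightarrow>\<^sub>0 nat) \<Rightarrow> zpoly" where
  "shift_var v f a =
     (if 0 < Poly_Mapping.lookup a v then f (a - Poly_Mapping.single v 1) else 0)"

lemma shift_var_lin_comb: "shift_var v (lin_comb n c g) = lin_comb n c (\<lambda>k. shift_var v (g k))"
  by (simp add: fun_eq_iff shift_var_def lin_comb_def)

lemma support_shift_var:
  "{a. shift_var v f a \<noteq> 0} = (\<lambda>b. Poly_Mapping.single v 1 + b) ` {b. f b \<noteq> 0}"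
proof (intro equalityI subsetI)
  fix a assume "a \<in> {a. shift_var v f a \<noteq> 0}"
  then have "0 < Poly_Mapping.lookup a v" "f (a - Poly_Mapping.single v 1) \<noteq> 0"
    by (simp_all add: shift_var_def split: if_splits)
  then show "a \<in> (\<lambda>b. Poly_Mapping.single v 1 + b) ` {b. f b \<noteq> 0}"
    by (metis (mono_tags, lifting) image_eqI mem_Collect_eq single_add_minus_single)
qed (auto simp: shift_var_def lookup_add)

lemma shift_var_in_free_mod:
  assumes "v \<le> m" and "f \<in> free_mod r m B"
  shows "shift_var v f \<in> free_mod r m B"
proof -
  have "finite {a. shift_var v f a \<noteq> 0}"
    unfolding support_shift_var using assms(2) by (simp add: free_mod_def)
  moreover have "a \<in> monos_m m" if nonzero: "shift_var v f a \<noteq> 0" for a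
  proof -
    obtain b where "a = Poly_Mapping.single v 1 + b" "f b \<noteq> 0"
      using nonzero support_shift_var[of v f] by blast
    with assms show ?thesis by (simp add: free_mod_def monos_m_def keys_add_nat)
  qed
  moreover have "shift_var v f a \<in> S_ring r m B" for a
    using assms(2) by (simp add: shift_var_def free_mod_def S_ring_zero)
  ultimately show ?thesis by (simp add: free_mod_def)
qed

lemma present_map_shift_var: "present_map (shift_var v f) = var_x v * present_map f"
proof -
  let ?e = "Poly_Mapping.single v 1"
  have "present_map (shift_var v f) =
      (\<Sum>a\<in>(\<lambda>b. ?e + b) ` {b. f b \<noteq> 0}. shift_var v f a * monom_x a)"
    by (simp add: present_map_def support_shift_var)
  also have "\<dots> = (\<Sum>b\<in>{b. f b \<noteq> 0}. f b * monom_x (?e + b))"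
    by (subst sum.reindex) (auto simp: inj_on_def shift_var_def lookup_add)
  also have "\<dots> = var_x v * present_map f"
    by (simp add: present_map_def sum_distrib_left var_x_def monom_x_mult[symmetric] ac_simps)
  finally show ?thesis .
qed

section \<open>Vanishing of Tor_1 for quotients of the polynomial ring\<close>

definition syzygies :: "nat \<Rightarrow> nat \<Rightarrow> (nat \<Rightarrow> nat \<Rightarrow> int) \<Rightarrow> zpoly set \<Rightarrow>
    ((nat \<Rightarrow>\<^sub>0 nat) \<Rightarrow> zpoly) set" where
  "syzygies r m B J = {f \<in> free_mod r m B. present_map f \<in> J}"

definition Tor1_quotient_vanishes :: "nat \<Rightarrow> nat \<Rightarrow> (nat \<Rightarrow> nat \<Rightarrow> int) \<Rightarrow> zpoly set \<Rightarrow> bool" where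
  "Tor1_quotient_vanishes r m B J \<longleftrightarrow>
     syzygies r m B J \<inter> ideal_times_free (aug_ideal r m B) (free_mod r m B)
       \<subseteq> ideal_times_mod (aug_ideal r m B) (syzygies r m B J)"

lemma Tor1_SR_vanishes_iff:
  "Tor1_SR_vanishes r m B L \<longleftrightarrow> Tor1_quotient_vanishes r m B (SR_ideal m L)"
  by (simp add: Tor1_SR_vanishes_def Tor1_quotient_vanishes_def syzygies_def syz_mod_def)

lemma syzygies_mono: "J \<subseteq> J' \<Longrightarrow> syzygies r m B J \<subseteq> syzygies r m B J'"
  by (auto simp: syzygies_def)

lemma lin_comb_in_ideal_times_mod:
  "\<forall>k<n. c k \<in> I \<and> g k \<in> N \<Longrightarrow> lin_comb n c g \<in> ideal_times_mod I N"
  unfolding ideal_times_mod_def lin_comb_def by blast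

lemma ideal_times_modE:
  assumes "f \<in> ideal_times_mod I N"
  obtains n :: nat and c g where "\<forall>k<n. c k \<in> I \<and> g k \<in> N" "f = lin_comb n c g"
  using assms unfolding ideal_times_mod_def lin_comb_def by blast

lemma ideal_times_mod_mono: "N \<subseteq> N' \<Longrightarrow> ideal_times_mod I N \<subseteq> ideal_times_mod I N'"
  unfolding ideal_times_mod_def by blast

lemma ideal_times_mod_add:
  assumes "f \<in> ideal_times_mod I N" and "g \<in> ideal_times_mod I N"
  shows "f + g \<in> ideal_times_mod I N"
proof -
  obtain n1 :: nat and c1 g1 where 1: "\<forall>k<n1. c1 k \<in> I \<and> g1 k \<in> N" "f = lin_comb n1 c1 g1"
    using assms(1) by (rule ideal_times_modE)
  obtain n2 :: nat and c2 g2 where 2: "\<forall>k<n2. c2 k \<in> I \<and> g2 k \<in> N" "g = lin_comb n2 c2 g2"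
    using assms(2) by (rule ideal_times_modE)
  define c where "c k = (if k < n1 then c1 k else c2 (k - n1))" for k
  define h where "h k = (if k < n1 then g1 k else g2 (k - n1))" for k
  have "f + g = lin_comb (n1 + n2) c h"
    unfolding 1 2 lin_comb_def c_def h_def by (simp add: fun_eq_iff sum_lessThan_add)
  moreover have "\<forall>k<n1 + n2. c k \<in> I \<and> h k \<in> N"
    using 1 2 by (auto simp: c_def h_def)
  ultimately show ?thesis by (simp add: lin_comb_in_ideal_times_mod)
qed

lemma lin_comb_in_ideal_times_free:
  assumes "\<forall>k<n. c k \<in> aug_ideal r m B \<and> h k \<in> free_mod r m B"
  shows "lin_comb n c h \<in> ideal_times_free (aug_ideal r m B) (free_mod r m B)"
proof -
  have "lin_comb n c h \<in> free_mod r m B"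
    using assms aug_ideal_subset_S_ring by (blast intro: lin_comb_in_free_mod)
  moreover have "lin_comb n c h a \<in> aug_ideal r m B" for a
    unfolding lin_comb_def
  proof (rule aug_ideal_sum)
    fix k assume "k \<in> {..<n}"
    with assms show "c k * h k a \<in> aug_ideal r m B"
      by (simp add: free_mod_def aug_ideal_mult_S_ring)
  qed
  ultimately show ?thesis by (simp add: ideal_times_free_def)
qed

lemma lin_comb_diff_in_ideal_times_syzygies:
  assumes "\<forall>k<n. c k \<in> aug_ideal r m B \<and> g k \<in> free_mod r m B \<and> h k \<in> free_mod r m B \<and>
      present_map (g k) - present_map (h k) \<in> J"
  shows "lin_comb n c g - lin_comb n c h \<in> ideal_times_mod (aug_ideal r m B) (syzygies r m B J)"
  unfolding lin_comb_diff
  by (rule lin_comb_in_ideal_times_mod)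
     (use assms in \<open>auto simp: syzygies_def diff_in_free_mod present_map_diff\<close>)

lemma Tor1_quotient_vanishesE:
  assumes "Tor1_quotient_vanishes r m B J"
    and "f \<in> free_mod r m B" "present_map f \<in> J" "\<forall>a. f a \<in> aug_ideal r m B"
  obtains n :: nat and c g
  where "\<forall>k<n. c k \<in> aug_ideal r m B \<and> g k \<in> syzygies r m B J" "f = lin_comb n c g"
proof -
  have "f \<in> ideal_times_mod (aug_ideal r m B) (syzygies r m B J)"
    using assms unfolding Tor1_quotient_vanishes_def syzygies_def ideal_times_free_def by blast
  then show ?thesis using that by (rule ideal_times_modE)
qed

lemma Tor1_quotient_vanishesD:
  assumes "Tor1_quotient_vanishes r m B J" and "J \<subseteq> J'"
    and "f \<in> syzygies r m B J \<inter> ideal_times_free (aug_ideal r m B) (free_mod r m B)"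
  shows "f \<in> ideal_times_mod (aug_ideal r m B) (syzygies r m B J')"
  using assms ideal_times_mod_mono[OF syzygies_mono[OF assms(2)]]
  unfolding Tor1_quotient_vanishes_def by blast

lemma aug_syzygy_split_Int:
  assumes J1: "poly_ideal m J1" and J2: "poly_ideal m J2"
    and "J1 \<subseteq> JW" and JW: "\<And>q. q \<in> JW \<Longrightarrow> \<exists>p\<in>J1. q - p \<in> J2"
    and "Tor1_quotient_vanishes r m B JW"
    and f: "f \<in> free_mod r m B" "present_map f \<in> J1" "\<forall>a. f a \<in> aug_ideal r m B"
  shows "\<exists>f'\<in>syzygies r m B (J1 \<inter> J2) \<inter> ideal_times_free (aug_ideal r m B) (free_mod r m B).
           f - f' \<in> ideal_times_mod (aug_ideal r m B) (syzygies r m B J1)"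
proof -
  let ?I = "aug_ideal r m B" and ?F = "free_mod r m B"
  obtain n :: nat and c g
    where cg: "\<forall>k<n. c k \<in> ?I \<and> g k \<in> syzygies r m B JW" and f_eq: "f = lin_comb n c g"
    using assms(5) f \<open>J1 \<subseteq> JW\<close> by (auto elim: Tor1_quotient_vanishesE)
  have "\<forall>k<n. \<exists>q\<in>polyring m. q \<in> J2 \<and> present_map (g k) - q \<in> J1"
  proof (intro allI impI)
    fix k assume "k < n"
    then obtain p where "p \<in> J1" "present_map (g k) - p \<in> J2"
      using cg JW by (auto simp: syzygies_def)
    then show "\<exists>q\<in>polyring m. q \<in> J2 \<and> present_map (g k) - q \<in> J1"
      using poly_ideal_subset[OF J2] by (intro bexI[of _ "present_map (g k) - p"]) auto
  qed
  then obtain h where h: "\<forall>k<n. h k \<in> ?F \<and>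
      present_map (h k) \<in> J2 \<and> present_map (g k) - present_map (h k) \<in> J1"
    by (rule present_map_surj_choice)
  have c: "\<forall>k<n. c k \<in> polyring m"
    using cg aug_ideal_subset_polyring by blast
  show ?thesis
  proof (intro bexI IntI)
    let ?f' = "lin_comb n c h"
    show "f - ?f' \<in> ideal_times_mod ?I (syzygies r m B J1)"
      unfolding f_eq
      by (rule lin_comb_diff_in_ideal_times_syzygies) (use cg h in \<open>simp add: syzygies_def\<close>)
    show f': "?f' \<in> ideal_times_free ?I ?F"
      using cg h by (simp add: lin_comb_in_ideal_times_free)
    have "present_map ?f' = (\<Sum>k<n. c k * present_map (h k))"
      using h present_map_lin_comb[of n h r m B c] by simp
    moreover have "\<dots> = present_map f - (\<Sum>k<n. c k * (present_map (g k) - present_map (h k)))"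
      using cg present_map_lin_comb[of n g r m B c]
      by (simp add: f_eq syzygies_def right_diff_distrib sum_subtractf)
    moreover have "(\<Sum>k<n. c k * present_map (h k)) \<in> J2"
      by (rule poly_ideal_sum[OF J2]) (use c h in auto)
    moreover have "present_map f - (\<Sum>k<n. c k * (present_map (g k) - present_map (h k))) \<in> J1"
      by (intro poly_ideal_diff[OF J1 f(2)] poly_ideal_sum[OF J1]) (use c h in auto)
    ultimately show "?f' \<in> syzygies r m B (J1 \<inter> J2)"
      using f' by (simp add: syzygies_def ideal_times_free_def)
  qed
qed

lemma Tor1_quotient_vanishes_Mayer_Vietoris:
  assumes "poly_ideal m J1" and "poly_ideal m J2"
    and "J1 \<subseteq> JW" and "\<And>q. q \<in> JW \<Longrightarrow> \<exists>p\<in>J1. q - p \<in> J2"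
    and "Tor1_quotient_vanishes r m B JW" and TU: "Tor1_quotient_vanishes r m B (J1 \<inter> J2)"
  shows "Tor1_quotient_vanishes r m B J1"
  unfolding Tor1_quotient_vanishes_def
proof
  let ?I = "aug_ideal r m B"
  fix f assume "f \<in> syzygies r m B J1 \<inter> ideal_times_free ?I (free_mod r m B)"
  then have "f \<in> free_mod r m B" "present_map f \<in> J1" "\<forall>a. f a \<in> ?I"
    by (simp_all add: syzygies_def ideal_times_free_def)
  then obtain f' where f': "f' \<in> syzygies r m B (J1 \<inter> J2) \<inter> ideal_times_free ?I (free_mod r m B)"
      and "f - f' \<in> ideal_times_mod ?I (syzygies r m B J1)"
    using aug_syzygy_split_Int[OF assms(1-5)] by blast
  moreover have "f' \<in> ideal_times_mod ?I (syzygies r m B J1)"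
    using Tor1_quotient_vanishesD[OF TU _ f'] by blast
  ultimately show "f \<in> ideal_times_mod ?I (syzygies r m B J1)"
    using ideal_times_mod_add[of "f - f'" _ _ f'] by simp
qed

lemma shift_var_in_ideal_times_syzygies:
  assumes "v \<le> m" and "Tor1_quotient_vanishes r m B JW"
    and JU: "\<And>t. t \<in> polyring m \<Longrightarrow> t \<in> JW \<Longrightarrow> var_x v * t \<in> JU"
    and H: "H \<in> syzygies r m B JW \<inter> ideal_times_free (aug_ideal r m B) (free_mod r m B)"
  shows "shift_var v H \<in> ideal_times_mod (aug_ideal r m B) (syzygies r m B JU)"
proof -
  obtain n :: nat and c w where cw: "\<forall>k<n. c k \<in> aug_ideal r m B \<and> w k \<in> syzygies r m B JW"
      and "H = lin_comb n c w"
    using Tor1_quotient_vanishesD[OF assms(2) order_refl H] by (rule ideal_times_modE)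
  have "shift_var v (w k) \<in> syzygies r m B JU" if "k < n" for k
  proof -
    have w: "w k \<in> free_mod r m B" "present_map (w k) \<in> JW"
      using cw that by (simp_all add: syzygies_def)
    then have "var_x v * present_map (w k) \<in> JU"
      using JU[OF present_map_in_polyring] by blast
    with w \<open>v \<le> m\<close> show ?thesis
      by (simp add: syzygies_def shift_var_in_free_mod present_map_shift_var)
  qed
  with cw show ?thesis
    unfolding \<open>H = lin_comb n c w\<close> shift_var_lin_comb by (simp add: lin_comb_in_ideal_times_mod)
qed

lemma aug_syzygy_split_shift:
  assumes JU: "poly_ideal m JU" and "v \<le> m" and "JU \<subseteq> JD"
    and JD: "\<And>q. q \<in> JD \<Longrightarrow> \<exists>t\<in>polyring m. q - var_x v * t \<in> JU"
    and JW: "\<And>t. t \<in> polyring m \<Longrightarrow> var_x v * t \<in> JU \<Longrightarrow> t \<in> JW"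
    and "Tor1_quotient_vanishes r m B JD"
    and g: "g \<in> free_mod r m B" "present_map g \<in> JU" "\<forall>a. g a \<in> aug_ideal r m B"
  shows "\<exists>H\<in>syzygies r m B JW \<inter> ideal_times_free (aug_ideal r m B) (free_mod r m B).
           g - shift_var v H \<in> ideal_times_mod (aug_ideal r m B) (syzygies r m B JU)"
proof -
  let ?I = "aug_ideal r m B" and ?F = "free_mod r m B"
  obtain n :: nat and c d
    where cd: "\<forall>k<n. c k \<in> ?I \<and> d k \<in> syzygies r m B JD" and g_eq: "g = lin_comb n c d"
    using assms(6) g \<open>JU \<subseteq> JD\<close> by (auto elim: Tor1_quotient_vanishesE)
  have "\<forall>k<n. \<exists>t\<in>polyring m. present_map (d k) - var_x v * t \<in> JU"
    using cd JD by (simp add: syzygies_def)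
  then obtain h
    where h: "\<forall>k<n. h k \<in> ?F \<and> present_map (d k) - var_x v * present_map (h k) \<in> JU"
    by (rule present_map_surj_choice)
  have c: "\<forall>k<n. c k \<in> polyring m"
    using cd aug_ideal_subset_polyring by blast
  show ?thesis
  proof (intro bexI IntI)
    let ?H = "lin_comb n c h"
    show "g - shift_var v ?H \<in> ideal_times_mod ?I (syzygies r m B JU)"
      unfolding g_eq shift_var_lin_comb
      by (rule lin_comb_diff_in_ideal_times_syzygies)
         (use cd h \<open>v \<le> m\<close> in
           \<open>auto simp: syzygies_def shift_var_in_free_mod present_map_shift_var\<close>)
    show H: "?H \<in> ideal_times_free ?I ?F"
      using cd h by (simp add: lin_comb_in_ideal_times_free)
    have "var_x v * present_map ?H = (\<Sum>k<n. c k * (var_x v * present_map (h k)))"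
      using h present_map_lin_comb[of n h r m B c] by (simp add: sum_distrib_left ac_simps)
    also have "\<dots> = present_map g -
        (\<Sum>k<n. c k * (present_map (d k) - var_x v * present_map (h k)))"
      using cd present_map_lin_comb[of n d r m B c]
      by (simp add: g_eq syzygies_def right_diff_distrib sum_subtractf)
    also have "\<dots> \<in> JU"
      by (intro poly_ideal_diff[OF JU g(2)] poly_ideal_sum[OF JU]) (use c h in auto)
    finally have "present_map ?H \<in> JW"
      using JW H present_map_in_polyring by (auto simp: ideal_times_free_def)
    with H show "?H \<in> syzygies r m B JW"
      by (simp add: syzygies_def ideal_times_free_def)
  qed
qed

lemma Tor1_quotient_vanishes_extension:
  assumes "poly_ideal m JU" and "v \<le> m" and "JU \<subseteq> JD"
    and "\<And>q. q \<in> JD \<Longrightarrow> \<exists>t\<in>polyring m. q - var_x v * t \<in> JU"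
    and JW: "\<And>t. t \<in> polyring m \<Longrightarrow> var_x v * t \<in> JU \<longleftrightarrow> t \<in> JW"
    and "Tor1_quotient_vanishes r m B JD" and "Tor1_quotient_vanishes r m B JW"
  shows "Tor1_quotient_vanishes r m B JU"
  unfolding Tor1_quotient_vanishes_def
proof
  let ?I = "aug_ideal r m B"
  fix g assume "g \<in> syzygies r m B JU \<inter> ideal_times_free ?I (free_mod r m B)"
  then have "g \<in> free_mod r m B" "present_map g \<in> JU" "\<forall>a. g a \<in> ?I"
    by (simp_all add: syzygies_def ideal_times_free_def)
  then obtain H where H: "H \<in> syzygies r m B JW \<inter> ideal_times_free ?I (free_mod r m B)"
      and "g - shift_var v H \<in> ideal_times_mod ?I (syzygies r m B JU)"
    using aug_syzygy_split_shift[OF assms(1-4) _ assms(6)] JW by blast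
  moreover have "shift_var v H \<in> ideal_times_mod ?I (syzygies r m B JU)"
    using shift_var_in_ideal_times_syzygies[OF \<open>v \<le> m\<close> assms(7) _ H] JW by blast
  ultimately show "g \<in> ideal_times_mod ?I (syzygies r m B JU)"
    using ideal_times_mod_add[of "g - shift_var v H" _ _ "shift_var v H"] by simp
qed

lemma Tor1_SR_vanishes_Mayer_Vietoris:
  assumes "downclosed K1" and "downclosed K2"
    and "Tor1_SR_vanishes r m B (K1 \<inter> K2)" and "Tor1_SR_vanishes r m B (K1 \<union> K2)"
  shows "Tor1_SR_vanishes r m B K1"
proof -
  have "Tor1_quotient_vanishes r m B (nonface_ideal m K1)"
  proof (rule Tor1_quotient_vanishes_Mayer_Vietoris)
    show "poly_ideal m (nonface_ideal m K1)" "poly_ideal m (nonface_ideal m K2)"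
      using assms(1,2) by (simp_all add: poly_ideal_nonface_ideal)
    show "nonface_ideal m K1 \<subseteq> nonface_ideal m (K1 \<inter> K2)"
      by (simp add: nonface_ideal_antimono)
    show "\<exists>p\<in>nonface_ideal m K1. q - p \<in> nonface_ideal m K2"
      if "q \<in> nonface_ideal m (K1 \<inter> K2)" for q
      using that by (rule nonface_ideal_Int_split)
    show "Tor1_quotient_vanishes r m B (nonface_ideal m (K1 \<inter> K2))"
      "Tor1_quotient_vanishes r m B (nonface_ideal m K1 \<inter> nonface_ideal m K2)"
      using assms
      by (simp_all add: Tor1_SR_vanishes_iff SR_ideal_eq_nonface_ideal downclosed_Int
          downclosed_Un nonface_ideal_Un)
  qed
  with assms(1) show ?thesis
    by (simp add: Tor1_SR_vanishes_iff SR_ideal_eq_nonface_ideal)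
qed

lemma Tor1_SR_vanishes_closed_star:
  assumes "downclosed L" and "downclosed L'" and "v \<le> m" and "L' \<subseteq> L"
    and "\<And>\<sigma>. \<sigma> \<in> L \<Longrightarrow> v \<notin> \<sigma> \<Longrightarrow> \<sigma> \<in> L'"
    and "Tor1_SR_vanishes r m B L'" and "Tor1_SR_vanishes r m B (closed_star L v)"
  shows "Tor1_SR_vanishes r m B L"
proof -
  have "Tor1_quotient_vanishes r m B (nonface_ideal m L)"
  proof (rule Tor1_quotient_vanishes_extension)
    show "poly_ideal m (nonface_ideal m L)"
      using assms(1) by (rule poly_ideal_nonface_ideal)
    show "nonface_ideal m L \<subseteq> nonface_ideal m L'"
      using assms(4) by (rule nonface_ideal_antimono)
    show "\<exists>t\<in>polyring m. q - var_x v * t \<in> nonface_ideal m L"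
      if "q \<in> nonface_ideal m L'" for q
      using assms(5) that by (rule nonface_ideal_split_var)
    show "var_x v * t \<in> nonface_ideal m L \<longleftrightarrow> t \<in> nonface_ideal m (closed_star L v)"
      if "t \<in> polyring m" for t
      using assms(3) that by (rule var_x_mult_in_nonface_ideal_iff)
    show "Tor1_quotient_vanishes r m B (nonface_ideal m L')"
      "Tor1_quotient_vanishes r m B (nonface_ideal m (closed_star L v))"
      using assms
      by (simp_all add: Tor1_SR_vanishes_iff SR_ideal_eq_nonface_ideal downclosed_closed_star)
  qed (fact assms(3))
  with assms(1) show ?thesis
    by (simp add: Tor1_SR_vanishes_iff SR_ideal_eq_nonface_ideal)
qed

section \<open>The complexes of a cut polytope\<close>

lemma convex_affine_halfspace: "convex {x. a \<bullet> x + c \<ge> (0::real)}"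
proof -
  have "{x. a \<bullet> x + c \<ge> 0} = {x. inner a x \<ge> - c}" by auto
  then show ?thesis by (simp only: convex_halfspace_ge)
qed

lemma convex_affine_hyperplane: "convex {x. a \<bullet> x + c = (0::real)}"
proof -
  have "{x. a \<bullet> x + c = 0} = {x. inner a x = - c}" by (auto simp: algebra_simps)
  then show ?thesis by (simp only: convex_hyperplane)
qed

lemma convex_polyhedron_of: "convex (polyhedron_of m lam eta)"
proof -
  have "polyhedron_of m lam eta = (\<Inter>i\<in>{1..m}. {x. lam i \<bullet> x + eta i \<ge> 0})"
    by (auto simp: polyhedron_of_def)
  then show ?thesis by (simp add: convex_INT convex_affine_halfspace)
qed

lemma convex_hyp: "convex (hyp lam eta lam0 xi j)"
  by (simp add: hyp_def convex_affine_hyperplane)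

lemma K_half_iff:
  "\<sigma> \<in> K_half m lam eta lam0 xi s \<longleftrightarrow> \<sigma> \<subseteq> {0..m} \<and>
     (\<sigma> = {} \<or> (\<exists>x\<in>half_poly m lam eta lam0 xi s. \<forall>j\<in>\<sigma>. x \<in> hyp lam eta lam0 xi j))"
proof (cases "\<sigma> = {}")
  case False
  have "x \<in> (if j = 0 then {x. lam0 \<bullet> x + xi = 0} \<inter> polyhedron_of m lam eta
              else facet_H m lam eta j) \<inter> half_poly m lam eta lam0 xi s \<longleftrightarrow>
        x \<in> half_poly m lam eta lam0 xi s \<and> x \<in> hyp lam eta lam0 xi j" for x j
    by (auto simp: facet_H_def half_poly_def hyp_def)
  with False show ?thesis
    unfolding K_half_def mem_Collect_eq INT_iff ex_in_conv[symmetric] by auto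
qed (simp add: K_half_def)

(* For j > 0, hyp lam eta lam0 xi j does not depend on lam0 and xi, which are arbitrary here. *)
lemma K_Delta_iff:
  "\<sigma> \<in> K_Delta m lam eta \<longleftrightarrow> \<sigma> \<subseteq> {1..m} \<and>
     (\<sigma> = {} \<or> (\<exists>x\<in>polyhedron_of m lam eta. \<forall>j\<in>\<sigma>. x \<in> hyp lam eta lam0 xi j))"
proof (cases "\<sigma> \<subseteq> {1..m} \<and> \<sigma> \<noteq> {}")
  case True
  then have "x \<in> facet_H m lam eta j \<longleftrightarrow> x \<in> polyhedron_of m lam eta \<and> x \<in> hyp lam eta lam0 xi j"
    if "j \<in> \<sigma>" for x j
    using that by (auto simp: facet_H_def hyp_def)
  with True show ?thesis
    unfolding K_Delta_def mem_Collect_eq INT_iff ex_in_conv[symmetric] by auto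
qed (auto simp: K_Delta_def)

lemma half_poly_iff:
  "x \<in> half_poly m lam eta lam0 xi s \<longleftrightarrow> x \<in> polyhedron_of m lam eta \<and>
     (if s then lam0 \<bullet> x + xi \<ge> 0 else lam0 \<bullet> x + xi \<le> 0)"
  by (auto simp: half_poly_def)

lemma downclosed_K_half: "downclosed (K_half m lam eta lam0 xi s)"
  unfolding downclosed_def K_half_def by blast

lemma downclosed_K_Delta: "downclosed (K_Delta m lam eta)"
  unfolding downclosed_def K_Delta_def by blast

lemma K_Delta_subset_K_half_Un:
  "K_Delta m lam eta \<subseteq> K_half m lam eta lam0 xi True \<union> K_half m lam eta lam0 xi False"
proof
  fix \<sigma> assume "\<sigma> \<in> K_Delta m lam eta"
  then have "\<sigma> \<subseteq> {0..m}"
    and "\<sigma> = {} \<or> (\<exists>x\<in>polyhedron_of m lam eta. \<forall>j\<in>\<sigma>. x \<in> hyp lam eta lam0 xi j)"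
    by (auto simp: K_Delta_iff[of _ m lam eta lam0 xi])
  moreover have "polyhedron_of m lam eta =
      half_poly m lam eta lam0 xi True \<union> half_poly m lam eta lam0 xi False"
    by (auto simp: half_poly_iff)
  ultimately show "\<sigma> \<in> K_half m lam eta lam0 xi True \<union> K_half m lam eta lam0 xi False"
    unfolding Un_iff K_half_iff by blast
qed

lemma K_half_avoiding_cut_in_K_Delta:
  assumes "\<sigma> \<in> K_half m lam eta lam0 xi s" and "0 \<notin> \<sigma>"
  shows "\<sigma> \<in> K_Delta m lam eta"
proof -
  have "\<sigma> \<subseteq> {1..m}"
  proof
    fix j assume j: "j \<in> \<sigma>"
    have "\<sigma> \<subseteq> {0..m}" using assms(1) by (simp add: K_half_iff)
    with j have "j \<le> m" by auto
    moreover from j assms(2) have "j \<noteq> 0" by (metis)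
    ultimately show "j \<in> {1..m}" by simp
  qed
  moreover have "half_poly m lam eta lam0 xi s \<subseteq> polyhedron_of m lam eta"
    by (auto simp: half_poly_def)
  ultimately show ?thesis
    using assms(1) unfolding K_half_iff K_Delta_iff[of _ m lam eta lam0 xi] by blast
qed

lemma K_half_through_cut_in_both:
  assumes "\<sigma> \<in> K_half m lam eta lam0 xi s" and "0 \<in> \<sigma>"
  shows "\<sigma> \<in> K_half m lam eta lam0 xi s'"
proof -
  have "x \<in> half_poly m lam eta lam0 xi s'"
    if "x \<in> half_poly m lam eta lam0 xi s" and "x \<in> hyp lam eta lam0 xi 0" for x
    using that by (simp add: half_poly_iff hyp_def)
  with assms show ?thesis
    unfolding K_half_iff by blast
qed

lemma insert_cut_in_K_half:
  assumes "generic_cut m lam eta lam0 xi"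
    and "\<sigma> \<in> K_half m lam eta lam0 xi True" and "\<sigma> \<in> K_half m lam eta lam0 xi False"
  shows "insert 0 \<sigma> \<in> K_half m lam eta lam0 xi s"
proof -
  let ?S = "polyhedron_of m lam eta \<inter> (\<Inter>j\<in>\<sigma>. hyp lam eta lam0 xi j)"
  obtain x y where "x \<in> ?S" "lam0 \<bullet> x + xi \<ge> 0" and "y \<in> ?S" "lam0 \<bullet> y + xi \<le> 0"
  proof (cases "\<sigma> = {}")
    case True
    then show ?thesis
      using assms(1) that unfolding generic_cut_def by fastforce
  next
    case False
    obtain x where x: "x \<in> half_poly m lam eta lam0 xi True" "\<forall>j\<in>\<sigma>. x \<in> hyp lam eta lam0 xi j"
      using assms(2) False by (auto simp: K_half_iff)
    obtain y where y: "y \<in> half_poly m lam eta lam0 xi False" "\<forall>j\<in>\<sigma>. y \<in> hyp lam eta lam0 xi j"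
      using assms(3) False by (auto simp: K_half_iff)
    show ?thesis
      by (rule that[of x y]) (use x y in \<open>auto simp: half_poly_iff\<close>)
  qed
  moreover have "connected ?S"
    by (intro convex_connected convex_Int convex_polyhedron_of convex_INT convex_hyp)
  ultimately obtain z where z: "z \<in> ?S" "lam0 \<bullet> z = - xi"
    using connected_ivt_hyperplane[of ?S y x lam0 "- xi"] by (auto simp: algebra_simps)
  then have "z \<in> half_poly m lam eta lam0 xi s"
    by (simp add: half_poly_iff)
  moreover have "\<forall>j\<in>insert 0 \<sigma>. z \<in> hyp lam eta lam0 xi j"
    using z by (simp add: hyp_def)
  moreover have "insert 0 \<sigma> \<subseteq> {0..m}"
    using assms(2) by (simp add: K_half_iff)
  ultimately show ?thesis
    unfolding K_half_iff by blast
qed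

lemma closed_star_cut_K_half_Un:
  assumes "generic_cut m lam eta lam0 xi"
  shows "closed_star (K_half m lam eta lam0 xi True \<union> K_half m lam eta lam0 xi False) 0
       = K_half m lam eta lam0 xi True \<inter> K_half m lam eta lam0 xi False"
proof (intro equalityI subsetI)
  fix \<sigma> assume "\<sigma> \<in> closed_star (K_half m lam eta lam0 xi True \<union> K_half m lam eta lam0 xi False) 0"
  then have "insert 0 \<sigma> \<in> K_half m lam eta lam0 xi s" for s
    unfolding closed_star_def using K_half_through_cut_in_both by blast
  then show "\<sigma> \<in> K_half m lam eta lam0 xi True \<inter> K_half m lam eta lam0 xi False"
    using downclosed_K_half unfolding downclosed_def by blast
qed (auto simp: closed_star_def insert_cut_in_K_half[OF assms])

theorem lemma4p12:
  fixes m r :: nat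
    and lam :: "nat \<Rightarrow> real^'n" and eta :: "nat \<Rightarrow> real"
    and lam0 :: "real^'n" and xi :: real
    and B :: "nat \<Rightarrow> nat \<Rightarrow> int"
  assumes "simple_polytope_data m lam eta"
    and "generic_cut m lam eta lam0 xi"
    and "full_row_rank r m B"
    and "Tor1_SR_vanishes r m B (K_half m lam eta lam0 xi True \<inter> K_half m lam eta lam0 xi False)"
    and "Tor1_SR_vanishes r m B (K_Delta m lam eta)"
  shows "Tor1_SR_vanishes r m B (K_half m lam eta lam0 xi True)
       \<and> Tor1_SR_vanishes r m B (K_half m lam eta lam0 xi False)"
proof -
  \<comment> \<open>Only the combinatorics of the cut enters.\<close>
  let ?Kp = "K_half m lam eta lam0 xi True" and ?Km = "K_half m lam eta lam0 xi False"
  have down: "downclosed ?Kp" "downclosed ?Km"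
    by (simp_all add: downclosed_K_half)
  have "Tor1_SR_vanishes r m B (?Kp \<union> ?Km)"
  proof (rule Tor1_SR_vanishes_closed_star[where v = 0 and L' = "K_Delta m lam eta"])
    show "downclosed (?Kp \<union> ?Km)" using down by (rule downclosed_Un)
    show "\<sigma> \<in> K_Delta m lam eta" if "\<sigma> \<in> ?Kp \<union> ?Km" and "0 \<notin> \<sigma>" for \<sigma>
      using that K_half_avoiding_cut_in_K_Delta by blast
    show "Tor1_SR_vanishes r m B (closed_star (?Kp \<union> ?Km) 0)"
      using assms(2,4) by (simp add: closed_star_cut_K_half_Un)
  qed (simp_all add: assms(5) downclosed_K_Delta K_Delta_subset_K_half_Un)
  then show ?thesis
    using Tor1_SR_vanishes_Mayer_Vietoris[OF down assms(4)]
      Tor1_SR_vanishes_Mayer_Vietoris[OF down(2,1)] assms(4)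
    by (simp add: Int_commute Un_commute)
qed

end
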